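(* Let $n,B$ be powers of $2$ with $2\le B\le n$, let $F\ge2$ be an even integer, $\epsilon=(1/4)^{F-1}$, and let $\hat G\in\mathbb{R}^n$ be a flat filter with $B$ buckets and sharpness $F$. Let $\sigma$ be uniformly random among the odd integers in $[n]$ and $b$ independently uniform in $[n]$. Then for all $f\neq f'$ in $[n]$ and all $\lambda\ge0$, \[\mathbb{E}\exp\bigl(\lambda\hat G_{o_{f,\sigma,b}(f')}\bigr)\le M(\lambda):=e^{\lambda\epsilon}\Bigl[\Bigl(\frac2B+\frac1n\Bigr)\bigl(e^{\lambda(1-\epsilon)}-1\bigr)+1\Bigr].\]
   Context: A flat filter with $B$ buckets and sharpness $F$ is a sequence $\hat G\in\mathbb{R}^n$ indexed by $\mathbb{Z}_n$ (with representatives $f\in\{-n/2,\dots,n/2-1\}$), symmetric about $0$, such that (1) $\hat G_f\in[0,1]$ for all $f$; (2) $\hat G_f\ge1-(1/4)^{F-1}$ whenever $|f|\le n/(2B)$; (3) $\hat G_f\le(1/4)^{F-1}\bigl(\frac{n}{B|f|}\bigr)^{F-1}$ whenever $|f|\ge n/B$. For $\sigma,b\in[n]$: $\pi_{\sigma,b}(f)=\sigma(f-b)\bmod n$; $h_{\sigma,b}(f)=\lfloor (B/n)\pi_{\sigma,b}(f)+1/2\rfloor$; $o_{f,\sigma,b}(f')=\pi_{\sigma,b}(f')-(n/B)h_{\sigma,b}(f)\bmod n$. *)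

theory Defs
  imports Complex_Main
begin

text \<open>Centered representative in Z_n: the unique element of
  {-n/2, ..., n/2-1} congruent to x modulo n.\<close>
definition cent :: "nat \<Rightarrow> int \<Rightarrow> int" where
  "cent n x = (x + int n div 2) mod int n - int n div 2"

text \<open>A flat filter with B buckets and sharpness F, given by its values on
  the representatives f in {-n/2, ..., n/2-1} of Z_n.\<close>
definition flat_filter :: "nat \<Rightarrow> nat \<Rightarrow> nat \<Rightarrow> (int \<Rightarrow> real) \<Rightarrow> bool" where
  "flat_filter n B F G \<longleftrightarrow>
     (\<forall>f. - (int n div 2) \<le> f \<and> f < int n div 2 \<longrightarrow>
        G (cent n (- f)) = G f \<and>
        0 \<le> G f \<and> G f \<le> 1 \<and>
        (real_of_int \<bar>f\<bar> \<le> real n / (2 * real B) \<longrightarrow> G f \<ge> 1 - (1/4) ^ (F - 1)) \<and>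
        (real_of_int \<bar>f\<bar> \<ge> real n / real B \<longrightarrow>
           G f \<le> (1/4) ^ (F - 1) * (real n / (real B * real_of_int \<bar>f\<bar>)) ^ (F - 1)))"

definition perm_pi :: "nat \<Rightarrow> int \<Rightarrow> int \<Rightarrow> int \<Rightarrow> int" where
  "perm_pi n \<sigma> b f = (\<sigma> * (f - b)) mod int n"

definition hash_h :: "nat \<Rightarrow> nat \<Rightarrow> int \<Rightarrow> int \<Rightarrow> int \<Rightarrow> int" where
  "hash_h n B \<sigma> b f = \<lfloor>real B / real n * real_of_int (perm_pi n \<sigma> b f) + 1/2\<rfloor>"

text \<open>Offset o_{f,sigma,b}(f'); n/B is an integer since n, B are powers of 2 with B <= n.\<close>
definition offset_o :: "nat \<Rightarrow> nat \<Rightarrow> int \<Rightarrow> int \<Rightarrow> int \<Rightarrow> int \<Rightarrow> int" where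
  "offset_o n B f \<sigma> b f' = (perm_pi n \<sigma> b f' - (int n div int B) * hash_h n B \<sigma> b f) mod int n"

end

theory Submission
  imports Defs
begin

text \<open>Let K = n/B. Off the event |o| < K flatness gives G o \<le> \<epsilon>, and always G o \<le> 1, so
  exp (\<lambda> G o) \<le> e^(\<lambda>\<epsilon>) (1 + (e^(\<lambda>(1-\<epsilon>)) - 1) [|o| < K]) and it suffices to bound the
  probability of that event by 2/B. Modulo n the offset is \<sigma>(f' - f) plus the centered residue
  of \<pi>(f) modulo K, and for fixed odd \<sigma> the value \<pi>(f) is uniform as b varies. Write
  f' - f = 2^s v with v odd: as \<sigma> runs over the odd residues, \<sigma>(f' - f) takes each residue
  congruent to 2^s modulo 2^(s+1) exactly 2^s times, and a window of length 2K contains at most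
  K/2^s such residues (none if 2^s > K). So for each value of \<pi>(f) at most K of the n/2 odd \<sigma>
  are bad, a probability of 2K/n = 2/B.\<close>

lemma cent_eqI:
  assumes "K > 0" "r mod int K = x mod int K" "- int K \<le> 2 * r" "2 * r < int K"
  shows "cent K x = r"
proof -
  have "(x + int K div 2) mod int K = (r + int K div 2) mod int K"
    using assms(2) by (metis mod_add_left_eq)
  also have "\<dots> = r + int K div 2"
    using assms(3,4) by (intro mod_pos_pos_trivial) linarith+
  finally show ?thesis unfolding cent_def by simp
qed

lemma cent_bounds:
  assumes "K > 0"
  shows "- int K \<le> 2 * cent K x" "2 * cent K x < int K"
proof -
  have "0 \<le> (x + int K div 2) mod int K" "(x + int K div 2) mod int K < int K"
    using assms by simp_all
  moreover have "int K = 2 * (int K div 2) + int K mod 2" "0 \<le> int K mod 2" "int K mod 2 < 2"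
    by simp_all
  ultimately show "- int K \<le> 2 * cent K x" "2 * cent K x < int K"
    unfolding cent_def by simp_all
qed

lemma cent_range:
  assumes "even n" "n > 0"
  shows "- (int n div 2) \<le> cent n x" "cent n x < int n div 2"
  using cent_bounds[OF assms(2), of x] assms(1) by (auto elim: evenE)

lemma cent_cong: "x mod int n = y mod int n \<Longrightarrow> cent n x = cent n y"
  unfolding cent_def by (metis mod_add_cong)

lemma cent_mod: "cent n x mod int n = x mod int n"
  unfolding cent_def by (simp add: mod_diff_left_eq)

lemma sub_mult_round_eq_cent:
  assumes "K > 0"
  shows "x - int K * \<lfloor>real_of_int x / real K + 1/2\<rfloor> = cent K x"
proof -
  define q where "q = \<lfloor>real_of_int x / real K + 1/2\<rfloor>"
  have "real_of_int q \<le> real_of_int x / real K + 1/2" "real_of_int x / real K + 1/2 < real_of_int q + 1"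
    unfolding q_def by linarith+
  then have "- real K \<le> 2 * real_of_int (x - int K * q)" "2 * real_of_int (x - int K * q) < real K"
    using assms by (simp_all add: field_simps)
  then have "- int K \<le> 2 * (x - int K * q)" "2 * (x - int K * q) < int K"
    by linarith+
  moreover have "(x - int K * q) mod int K = x mod int K"
    by (simp add: mod_diff_right_eq[symmetric])
  ultimately show ?thesis
    unfolding q_def by (intro cent_eqI[symmetric] assms)
qed

lemma cent_offset_o:
  assumes "n = B * K" "n > 0"
  shows "cent n (offset_o n B f \<sigma> b f') = cent n (\<sigma> * (f' - f) + cent K (perm_pi n \<sigma> b f))"
proof (rule cent_cong)
  let ?p = "perm_pi n \<sigma> b f" and ?h = "hash_h n B \<sigma> b f"
  have K: "K > 0" and div: "int n div int B = int K"
    using assms by simp_all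
  have "?h = \<lfloor>real_of_int ?p / real K + 1/2\<rfloor>"
    using assms unfolding hash_h_def by simp
  then have round: "?p - int K * ?h = cent K ?p"
    using sub_mult_round_eq_cent[OF K] by simp
  have "\<sigma> * (f' - b) = \<sigma> * (f' - f) + \<sigma> * (f - b)"
    by (simp add: algebra_simps)
  then have "perm_pi n \<sigma> b f' mod int n = (\<sigma> * (f' - f) + ?p) mod int n"
    unfolding perm_pi_def by (simp add: mod_add_right_eq)
  then have "offset_o n B f \<sigma> b f' mod int n = (\<sigma> * (f' - f) + ?p - int K * ?h) mod int n"
    unfolding offset_o_def div by (metis mod_diff_left_eq mod_mod_trivial)
  then show "offset_o n B f \<sigma> b f' mod int n = (\<sigma> * (f' - f) + cent K ?p) mod int n"
    by (simp add: round[symmetric] algebra_simps)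
qed

lemma sum_reindex_mult_mod:
  fixes \<phi> :: "int \<Rightarrow> 'a::comm_monoid_add"
  assumes "n > 0" "coprime \<sigma> (int n)"
  shows "(\<Sum>b\<in>{0..<int n}. \<phi> ((\<sigma> * (f - b)) mod int n)) = (\<Sum>p\<in>{0..<int n}. \<phi> p)"
proof (rule sum.reindex_bij_betw)
  let ?h = "\<lambda>b. (\<sigma> * (f - b)) mod int n"
  have inj: "inj_on ?h {0..<int n}"
  proof (rule inj_onI)
    fix b b' assume b: "b \<in> {0..<int n}" "b' \<in> {0..<int n}" and "?h b = ?h b'"
    then have "int n dvd \<sigma> * (b' - b)"
      by (simp add: mod_eq_dvd_iff algebra_simps)
    then have "int n dvd b' - b"
      using assms(2) by (simp add: coprime_commute coprime_dvd_mult_right_iff)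
    moreover have "\<bar>b' - b\<bar> < int n"
      using b by auto
    ultimately show "b = b'"
      using dvd_imp_le_int[of "b' - b" "int n"] by fastforce
  qed
  moreover have "?h ` {0..<int n} \<subseteq> {0..<int n}"
    using assms(1) by auto
  ultimately show "bij_betw ?h {0..<int n} {0..<int n}"
    by (simp add: bij_betw_def endo_inj_surj)
qed

lemma exists_pow2_mult_odd:
  fixes u :: int
  assumes "u \<noteq> 0"
  shows "\<exists>s v. u = 2 ^ s * v \<and> odd v"
  using assms
proof (induction "nat \<bar>u\<bar>" arbitrary: u rule: less_induct)
  case less
  show ?case
  proof (cases "odd u")
    case True
    then show ?thesis
      by (rule_tac x=0 in exI) auto
  next
    case False
    then obtain w where w: "u = 2 * w"
      by (auto elim: evenE)
    with less.prems have "w \<noteq> 0" "nat \<bar>w\<bar> < nat \<bar>u\<bar>"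
      by auto
    then obtain s v where "w = 2 ^ s * v" "odd v"
      using less.hyps by blast
    then show ?thesis
      using w by (rule_tac x="Suc s" in exI) auto
  qed
qed

lemma card_residue_class_interval_le:
  fixes a c d :: int
  assumes "c > 0"
  shows "card {y. a \<le> y \<and> y < a + int m * c \<and> y mod c = d} \<le> m"
proof -
  let ?S = "{y. a \<le> y \<and> y < a + int m * c \<and> y mod c = d}"
  let ?h = "\<lambda>y. nat ((y - a) div c)"
  have "inj_on ?h ?S"
  proof (rule inj_onI)
    fix y y' assume y: "y \<in> ?S" and y': "y' \<in> ?S" and "?h y = ?h y'"
    then have div: "(y - a) div c = (y' - a) div c"
      using assms by (simp add: nat_eq_iff2 pos_imp_zdiv_nonneg_iff)
    have mod: "(y - a) mod c = (y' - a) mod c"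
      using y y' by (metis (mono_tags, lifting) mem_Collect_eq mod_diff_left_eq)
    have "y - a = c * ((y - a) div c) + (y - a) mod c"
      by simp
    also have "\<dots> = y' - a"
      unfolding div mod by simp
    finally show "y = y'"
      by simp
  qed
  moreover have "?h ` ?S \<subseteq> {..<m}"
  proof clarsimp
    fix y assume "a \<le> y" "y < a + int m * c"
    moreover have "(y - a) div c * c + (y - a) mod c = y - a" "0 \<le> (y - a) mod c"
      using assms by simp_all
    ultimately have "(y - a) div c * c < int m * c"
      by linarith
    then have "(y - a) div c < int m"
      using assms by (simp add: mult_less_cancel_right)
    moreover have "0 \<le> (y - a) div c"
      using assms \<open>a \<le> y\<close> by (simp add: pos_imp_zdiv_nonneg_iff)
    ultimately show "nat ((y - a) div c) < m"
      by (simp add: nat_less_iff)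
  qed
  ultimately show ?thesis
    using card_inj_on_le[of ?h ?S "{..<m}"] by simp
qed

lemma le_abs_of_mod_double_eq:
  fixes y g :: int
  assumes "g > 0" "y mod (2 * g) = g"
  shows "g \<le> \<bar>y\<bar>"
proof -
  have "y = g * (2 * (y div (2 * g)) + 1)"
    using div_mult_mod_eq[of y "2 * g"] assms(2) by (simp add: algebra_simps)
  then have "\<bar>y\<bar> = g * \<bar>2 * (y div (2 * g)) + 1\<bar>"
    using assms(1) by (metis abs_mult abs_of_pos)
  moreover have "g * 1 \<le> g * \<bar>2 * (y div (2 * g)) + 1\<bar>"
    using assms(1) by (intro mult_left_mono) (auto simp: abs_if)
  ultimately show ?thesis
    by simp
qed

lemma card_window_residue_class_le:
  fixes r :: int
  assumes "K = 2 ^ i" "- int K \<le> 2 * r" "2 * r < int K"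
  shows "card {y. \<bar>y + r\<bar> < int K \<and> y mod 2 ^ Suc s = 2 ^ s} * 2 ^ s \<le> K"
proof (cases "s \<le> i")
  case True
  let ?m = "2 ^ (i - s) :: nat" and ?Y = "{y. \<bar>y + r\<bar> < int K \<and> y mod 2 ^ Suc s = 2 ^ s}"
  have mK: "?m * 2 ^ s = K"
    using True assms(1) by (simp add: power_add[symmetric])
  then have window: "int ?m * 2 ^ Suc s = 2 * int K"
    unfolding mK[symmetric] by simp
  have "card {y. - int K - r \<le> y \<and> y < - int K - r + int ?m * 2 ^ Suc s \<and> y mod 2 ^ Suc s = 2 ^ s} \<le> ?m"
    by (rule card_residue_class_interval_le) simp
  moreover have "?Y \<subseteq> {y. - int K - r \<le> y \<and> y < - int K - r + int ?m * 2 ^ Suc s \<and> y mod 2 ^ Suc s = 2 ^ s}"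
    unfolding window by auto
  moreover have "finite {y. - int K - r \<le> y \<and> y < - int K - r + int ?m * 2 ^ Suc s \<and> y mod 2 ^ Suc s = 2 ^ s}"
    by (rule finite_subset[of _ "{- int K - r..< - int K - r + int ?m * 2 ^ Suc s}"]) auto
  ultimately have "card ?Y \<le> ?m"
    by (meson card_mono order_trans)
  then show ?thesis
    using mult_right_mono[of "card ?Y" ?m "2 ^ s"] mK by simp
next
  case False
  have "\<not> (\<bar>y + r\<bar> < int K \<and> y mod 2 ^ Suc s = 2 ^ s)" for y :: int
  proof
    assume y: "\<bar>y + r\<bar> < int K \<and> y mod 2 ^ Suc s = 2 ^ s"
    then have "2 ^ s \<le> \<bar>y\<bar>"
      by (intro le_abs_of_mod_double_eq) simp_all
    moreover have "2 * int K \<le> 2 ^ s"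
      using False assms(1) power_increasing[of "Suc i" s "2::int"] by simp
    ultimately show False
      using y assms(2,3) by linarith
  qed
  then have empty: "{y. \<bar>y + r\<bar> < int K \<and> y mod 2 ^ Suc s = 2 ^ s} = {}"
    by blast
  show ?thesis
    unfolding empty by simp
qed

text \<open>For odd \<sigma>, \<sigma> u mod n depends only on \<sigma> mod 2^(k-s) and is congruent to 2^s modulo 2^(s+1).\<close>

lemma card_odd_mult_mod_le:
  fixes u v :: int and P :: "int \<Rightarrow> bool"
  assumes n: "n = 2 ^ k" and u: "u = 2 ^ s * v" and "odd v" "s < k"
  shows "card {\<sigma> \<in> {0..<int n}. odd \<sigma> \<and> P ((\<sigma> * u) mod int n)}
    \<le> card {x \<in> {0..<int n}. x mod 2 ^ Suc s = 2 ^ s \<and> P x} * 2 ^ s"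
proof -
  define M :: int where "M = 2 ^ (k - s)"
  let ?A = "{\<sigma> \<in> {0..<int n}. odd \<sigma> \<and> P ((\<sigma> * u) mod int n)}"
  and ?X = "{x \<in> {0..<int n}. x mod 2 ^ Suc s = 2 ^ s \<and> P x}"
  and ?h = "\<lambda>\<sigma>. ((\<sigma> * u) mod int n, \<sigma> div M)"
  have nM: "int n = 2 ^ s * M"
    unfolding n M_def using assms(4) by (simp add: power_add[symmetric])
  have dvd: "2 ^ Suc s dvd int n"
    unfolding n using assms(4) le_imp_power_dvd[of "Suc s" k "2::int"] by simp
  have "inj_on ?h ?A"
  proof (rule inj_onI)
    fix a b assume "a \<in> ?A" "b \<in> ?A" and eq: "?h a = ?h b"
    then have "int n dvd a * u - b * u"
      by (simp add: mod_eq_dvd_iff)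
    then have "2 ^ s * M dvd 2 ^ s * ((a - b) * v)"
      unfolding nM u by (simp add: algebra_simps)
    then have "M dvd (a - b) * v"
      by simp
    moreover have "coprime M v"
      unfolding M_def using \<open>odd v\<close> by simp
    ultimately have "a mod M = b mod M"
      by (simp add: coprime_dvd_mult_left_iff mod_eq_dvd_iff)
    moreover have "a div M = b div M"
      using eq by simp
    ultimately show "a = b"
      by (metis mult_div_mod_eq)
  qed
  moreover have "?h ` ?A \<subseteq> ?X \<times> {0..<2 ^ s}"
  proof (rule image_subsetI)
    fix \<sigma> assume "\<sigma> \<in> ?A"
    then have \<sigma>: "\<sigma> \<in> {0..<int n}" "odd \<sigma>" "P ((\<sigma> * u) mod int n)"
      by simp_all
    have "(\<sigma> * u) mod int n mod 2 ^ Suc s = (2 ^ s * (\<sigma> * v)) mod (2 ^ s * 2)"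
      using dvd by (simp add: mod_mod_cancel u algebra_simps)
    also have "\<dots> = 2 ^ s * ((\<sigma> * v) mod 2)"
      by (rule mult_mod_right[symmetric])
    also have "(\<sigma> * v) mod 2 = 1"
      using \<sigma>(2) \<open>odd v\<close> by (simp add: odd_iff_mod_2_eq_one[symmetric])
    finally have "(\<sigma> * u) mod int n mod 2 ^ Suc s = 2 ^ s"
      by simp
    moreover have "0 \<le> \<sigma> div M" "\<sigma> div M < 2 ^ s"
    proof -
      have M: "M > 0"
        unfolding M_def by simp
      then show "0 \<le> \<sigma> div M"
        using \<sigma>(1) by (simp add: pos_imp_zdiv_nonneg_iff)
      have "\<sigma> div M * M + \<sigma> mod M = \<sigma>" "0 \<le> \<sigma> mod M" "\<sigma> < 2 ^ s * M"
        using M \<sigma>(1) nM by (simp_all only: div_mult_mod_eq pos_mod_sign) simp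
      then have "\<sigma> div M * M < 2 ^ s * M"
        by linarith
      then show "\<sigma> div M < 2 ^ s"
        using M by (simp add: mult_less_cancel_right)
    qed
    ultimately show "?h \<sigma> \<in> ?X \<times> {0..<2 ^ s}"
      using \<sigma> by simp
  qed
  moreover have "finite ?X"
    by (rule finite_subset[of _ "{0..<int n}"]) auto
  ultimately have "card ?A \<le> card (?X \<times> {0..<(2::int) ^ s})"
    by (intro card_inj_on_le) auto
  then show ?thesis
    by (simp add: card_cartesian_product nat_power_eq)
qed

lemma card_residue_class_cent_le:
  fixes r :: int
  assumes "2 ^ Suc s dvd int n"
  shows "card {x \<in> {0..<int n}. x mod 2 ^ Suc s = 2 ^ s \<and> \<bar>cent n (x + r)\<bar> < int K}
    \<le> card {y. \<bar>y + r\<bar> < int K \<and> y mod 2 ^ Suc s = 2 ^ s}"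
proof (rule card_inj_on_le)
  let ?X = "{x \<in> {0..<int n}. x mod 2 ^ Suc s = 2 ^ s \<and> \<bar>cent n (x + r)\<bar> < int K}"
    and ?Y = "{y. \<bar>y + r\<bar> < int K \<and> y mod 2 ^ Suc s = 2 ^ s}"
    and ?h = "\<lambda>x. cent n (x + r) - r"
  have mod_n: "?h x mod int n = x mod int n" for x
    using mod_diff_cong[OF cent_mod[of n "x + r"] refl, of r] by simp
  show "inj_on ?h ?X"
  proof (rule inj_onI)
    fix x x' assume "x \<in> ?X" "x' \<in> ?X" and eq: "?h x = ?h x'"
    then have "x = x mod int n" "x' = x' mod int n"
      by simp_all
    moreover have "x mod int n = x' mod int n"
      using mod_n[of x] mod_n[of x'] eq by simp
    ultimately show "x = x'"
      by simp
  qed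
  show "?h ` ?X \<subseteq> ?Y"
  proof (rule image_subsetI)
    fix x assume "x \<in> ?X"
    have "?h x mod 2 ^ Suc s = ?h x mod int n mod 2 ^ Suc s"
      using assms by (simp add: mod_mod_cancel)
    also have "\<dots> = x mod 2 ^ Suc s"
      using assms by (simp add: mod_n mod_mod_cancel)
    finally show "?h x \<in> ?Y"
      using \<open>x \<in> ?X\<close> by simp
  qed
  show "finite ?Y"
    by (rule finite_subset[of _ "{- int K - r..int K - r}"]) auto
qed

lemma card_odd_mult_cent_small_le:
  fixes u r :: int
  assumes n: "n = 2 ^ k" and K: "K = 2 ^ i" and "u \<noteq> 0" "\<bar>u\<bar> < int n"
    and r: "- int K \<le> 2 * r" "2 * r < int K"
  shows "card {\<sigma> \<in> {0..<int n}. odd \<sigma> \<and> \<bar>cent n (\<sigma> * u + r)\<bar> < int K} \<le> K"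
proof -
  obtain s v where u: "u = 2 ^ s * v" and "odd v"
    using exists_pow2_mult_odd[OF \<open>u \<noteq> 0\<close>] by blast
  then have "1 \<le> \<bar>v\<bar>"
    by (metis abs_zero even_zero int_one_le_iff_zero_less zero_less_abs_iff)
  then have "(2::int) ^ s \<le> \<bar>u\<bar>"
    using mult_left_mono[of 1 "\<bar>v\<bar>" "2 ^ s :: int"] unfolding u by (simp add: abs_mult)
  from order_le_less_trans[OF this \<open>\<bar>u\<bar> < int n\<close>] have "s < k"
    unfolding n by simp
  then have "2 ^ Suc s dvd int n"
    unfolding n using le_imp_power_dvd[of "Suc s" k "2::int"] by simp
  have "cent n (\<sigma> * u + r) = cent n ((\<sigma> * u) mod int n + r)" for \<sigma>
    by (rule cent_cong) (simp add: mod_add_left_eq)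
  then have "card {\<sigma> \<in> {0..<int n}. odd \<sigma> \<and> \<bar>cent n (\<sigma> * u + r)\<bar> < int K}
      = card {\<sigma> \<in> {0..<int n}. odd \<sigma> \<and> \<bar>cent n ((\<sigma> * u) mod int n + r)\<bar> < int K}"
    by (simp only:)
  also have "\<dots> \<le> card {x \<in> {0..<int n}. x mod 2 ^ Suc s = 2 ^ s \<and> \<bar>cent n (x + r)\<bar> < int K} * 2 ^ s"
    by (rule card_odd_mult_mod_le[OF n u \<open>odd v\<close> \<open>s < k\<close>])
  also have "\<dots> \<le> card {y. \<bar>y + r\<bar> < int K \<and> y mod 2 ^ Suc s = 2 ^ s} * 2 ^ s"
    using card_residue_class_cent_le[OF \<open>2 ^ Suc s dvd int n\<close>] by (rule mult_right_mono) simp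
  also have "\<dots> \<le> K"
    by (rule card_window_residue_class_le[OF K r])
  finally show ?thesis .
qed

lemma exp_le_indicator_bound:
  fixes g \<epsilon> lam :: real
  assumes "0 \<le> g" "g \<le> 1" "\<not> P \<Longrightarrow> g \<le> \<epsilon>" "0 \<le> lam"
  shows "exp (lam * g) \<le> exp (lam * \<epsilon>) * (1 + (exp (lam * (1 - \<epsilon>)) - 1) * of_bool P)"
proof (cases P)
  case True
  have "exp (lam * g) \<le> exp lam"
    using assms by (simp add: mult_left_le)
  also have "\<dots> = exp (lam * \<epsilon>) * exp (lam * (1 - \<epsilon>))"
    by (simp add: exp_add[symmetric] algebra_simps)
  finally show ?thesis
    using True by simp
next
  case False
  then show ?thesis
    using assms by (simp add: mult_left_mono)
qed

lemma flat_filter_cent_bounded: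
  assumes "flat_filter n B F G" "even n" "n > 0"
  shows "0 \<le> G (cent n x)" "G (cent n x) \<le> 1"
  using assms(1) cent_range[OF assms(2,3), of x] unfolding flat_filter_def by blast+

lemma flat_filter_cent_le_outside:
  assumes "flat_filter n B F G" "even n" "n = B * K" "n > 0" "int K \<le> \<bar>cent n x\<bar>"
  shows "G (cent n x) \<le> (1/4) ^ (F - 1)"
proof -
  let ?c = "real_of_int \<bar>cent n x\<bar>"
  have K: "real n / real B = real K" "real K > 0"
    using assms(3,4) by auto
  have Kc: "real K \<le> ?c"
    using assms(5) of_int_le_iff[of "int K" "\<bar>cent n x\<bar>", where 'a=real] by simp
  then have "?c \<ge> real n / real B"
    using K by simp
  then have "G (cent n x) \<le> (1/4) ^ (F - 1) * (real n / (real B * ?c)) ^ (F - 1)"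
    using assms(1) cent_range[OF assms(2,4), of x] unfolding flat_filter_def by blast
  also have "\<dots> \<le> (1/4) ^ (F - 1)"
  proof -
    have "real n / (real B * ?c) = real K / ?c"
      using K(1) by (simp flip: divide_divide_eq_left)
    also have "\<dots> \<le> 1"
      using K(2) Kc by (simp add: divide_le_eq_1)
    finally have "real n / (real B * ?c) \<le> 1" .
    then show ?thesis
      by (simp add: mult_left_le power_le_one)
  qed
  finally show ?thesis .
qed

lemma card_odd_atLeastLessThan:
  assumes "even n"
  shows "card {s \<in> {0..<int n}. odd s} = n div 2"
proof -
  have "{s \<in> {0..<int n}. odd s} = (\<lambda>i. 2 * i + 1) ` {0..<int n div 2}"
  proof (intro equalityI subsetI)
    fix s assume "s \<in> {s \<in> {0..<int n}. odd s}"
    then show "s \<in> (\<lambda>i. 2 * i + 1) ` {0..<int n div 2}"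
      using assms by (auto elim!: oddE)
  qed (use assms in auto)
  moreover have "inj_on (\<lambda>i::int. 2 * i + 1) {0..<int n div 2}"
    by (rule inj_onI) simp
  ultimately show ?thesis
    by (simp add: card_image)
qed

lemma sum_offset_o_cent_small_le:
  assumes n: "n = 2 ^ k" and nBK: "n = B * K" and K: "K = 2 ^ i"
    and "f \<in> {0..<int n}" "f' \<in> {0..<int n}" "f \<noteq> f'"
  shows "(\<Sum>\<sigma>\<in>{s \<in> {0..<int n}. odd s}. \<Sum>b\<in>{0..<int n}.
      of_bool (\<bar>cent n (offset_o n B f \<sigma> b f')\<bar> < int K)) \<le> real n * real K"
proof -
  let ?S = "{s \<in> {0..<int n}. odd s}" and ?u = "f' - f"
  let ?small = "\<lambda>\<sigma> p. \<bar>cent n (\<sigma> * ?u + cent K p)\<bar> < int K"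
  have n0: "n > 0" and K0: "K > 0"
    using n K by simp_all
  have u: "?u \<noteq> 0" "\<bar>?u\<bar> < int n"
    using assms(4-6) by auto
  have "(\<Sum>b\<in>{0..<int n}. of_bool (\<bar>cent n (offset_o n B f \<sigma> b f')\<bar> < int K))
      = (\<Sum>p\<in>{0..<int n}. of_bool (?small \<sigma> p) :: real)" if "\<sigma> \<in> ?S" for \<sigma>
  proof -
    have "coprime \<sigma> (int n)"
      using that unfolding n by simp
    then show ?thesis
      using sum_reindex_mult_mod[OF n0, of \<sigma> "\<lambda>p. of_bool (?small \<sigma> p)" f]
      by (simp add: cent_offset_o[OF nBK n0] perm_pi_def del: sum_of_bool_eq)
  qed
  then have "(\<Sum>\<sigma>\<in>?S. \<Sum>b\<in>{0..<int n}. of_bool (\<bar>cent n (offset_o n B f \<sigma> b f')\<bar> < int K))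
      = (\<Sum>\<sigma>\<in>?S. \<Sum>p\<in>{0..<int n}. of_bool (?small \<sigma> p) :: real)"
    by (rule sum.cong[OF refl])
  also have "\<dots> = (\<Sum>p\<in>{0..<int n}. \<Sum>\<sigma>\<in>?S. of_bool (?small \<sigma> p))"
    by (rule sum.swap)
  also have "\<dots> \<le> (\<Sum>p\<in>{0..<int n}. real K)"
  proof (rule sum_mono)
    fix p
    have "card (?S \<inter> {\<sigma>. ?small \<sigma> p}) \<le> K"
      using card_odd_mult_cent_small_le[OF n K u cent_bounds[OF K0, of p]]
      by (simp add: Int_def)
    moreover have "finite ?S"
      by (rule finite_subset[of _ "{0..<int n}"]) auto
    ultimately show "(\<Sum>\<sigma>\<in>?S. of_bool (?small \<sigma> p)) \<le> real K"
      by simp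
  qed
  also have "\<dots> = real n * real K"
    by simp
  finally show ?thesis .
qed

lemma pow2_eq_mult_pow2:
  fixes n B :: nat
  assumes "n = 2 ^ k" "B = 2 ^ j" "B \<le> n"
  shows "n = B * 2 ^ (k - j)"
proof -
  have "j \<le> k"
    using assms by simp
  then show ?thesis
    using assms(1,2) by (simp flip: power_add)
qed

lemma sum_exp_flat_filter_offset_le:
  assumes "flat_filter n B F G" and n: "n = 2 ^ k" and nBK: "n = B * K" and K: "K = 2 ^ i"
    and "even n" "f \<in> {0..<int n}" "f' \<in> {0..<int n}" "f \<noteq> f'" "lam \<ge> 0"
  shows "(\<Sum>\<sigma>\<in>{s \<in> {0..<int n}. odd s}. \<Sum>b\<in>{0..<int n}.
            exp (lam * G (cent n (offset_o n B f \<sigma> b f'))))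
    \<le> exp (lam * (1/4) ^ (F - 1)) * (real (card {s \<in> {0..<int n}. odd s}) * real n
         + (exp (lam * (1 - (1/4) ^ (F - 1))) - 1) * (real n * real K))"
proof -
  define \<epsilon> :: real where "\<epsilon> = (1/4) ^ (F - 1)"
  define D where "D = exp (lam * (1 - \<epsilon>)) - 1"
  let ?S = "{s \<in> {0..<int n}. odd s}"
  let ?small = "\<lambda>\<sigma> b. \<bar>cent n (offset_o n B f \<sigma> b f')\<bar> < int K"
  have n0: "n > 0"
    using n by simp
  have "D \<ge> 0"
    unfolding D_def \<epsilon>_def using \<open>lam \<ge> 0\<close> by (simp add: power_le_one)
  have "exp (lam * G (cent n x)) \<le> exp (lam * \<epsilon>) * (1 + D * of_bool (\<bar>cent n x\<bar> < int K))" for x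
    unfolding D_def \<epsilon>_def using \<open>lam \<ge> 0\<close>
    by (intro exp_le_indicator_bound flat_filter_cent_bounded[OF assms(1) \<open>even n\<close> n0]
        flat_filter_cent_le_outside[OF assms(1) \<open>even n\<close> nBK n0]) auto
  then have "(\<Sum>\<sigma>\<in>?S. \<Sum>b\<in>{0..<int n}. exp (lam * G (cent n (offset_o n B f \<sigma> b f'))))
      \<le> (\<Sum>\<sigma>\<in>?S. \<Sum>b\<in>{0..<int n}. exp (lam * \<epsilon>) * (1 + D * of_bool (?small \<sigma> b)))"
    by (intro sum_mono)
  also have "\<dots> = exp (lam * \<epsilon>) * (real (card ?S) * real n
      + D * (\<Sum>\<sigma>\<in>?S. \<Sum>b\<in>{0..<int n}. of_bool (?small \<sigma> b)))"
    by (simp add: sum.distrib sum_distrib_left algebra_simps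
        del: sum_of_bool_eq sum_mult_of_bool_eq sum_of_bool_mult_eq)
  also have "\<dots> \<le> exp (lam * \<epsilon>) * (real (card ?S) * real n + D * (real n * real K))"
    using sum_offset_o_cent_small_le[OF n nBK K assms(6-8)] \<open>D \<ge> 0\<close>
    by (intro mult_left_mono add_left_mono) auto
  finally show ?thesis
    unfolding \<epsilon>_def D_def .
qed

theorem lemma5p6:
  fixes n B F :: nat and G :: "int \<Rightarrow> real" and f f' :: int and lam :: real
  assumes "\<exists>k. n = 2 ^ k" and "\<exists>j. B = 2 ^ j" and "2 \<le> B" and "B \<le> n"
    and "F \<ge> 2" and "even F"
    and "flat_filter n B F G"
    and "f \<in> {0..<int n}" and "f' \<in> {0..<int n}" and "f \<noteq> f'"
    and "lam \<ge> 0"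
  shows "(\<Sum>\<sigma>\<in>{s \<in> {0..<int n}. odd s}. \<Sum>b\<in>{0..<int n}.
            exp (lam * G (cent n (offset_o n B f \<sigma> b f'))))
          / (real (card {s \<in> {0..<int n}. odd s}) * real n)
         \<le> exp (lam * (1/4) ^ (F - 1)) *
            ((2 / real B + 1 / real n) * (exp (lam * (1 - (1/4) ^ (F - 1))) - 1) + 1)"
proof -
  obtain k j where n: "n = 2 ^ k" and B: "B = 2 ^ j"
    using assms(1,2) by blast
  define K :: nat where "K = 2 ^ (k - j)"
  have nBK: "n = B * K"
    unfolding K_def using pow2_eq_mult_pow2[OF n B assms(4)] .
  have "k \<noteq> 0"
    using assms(3,4) n by (auto intro: ccontr)
  then have "even n"
    using n by simp
  then have S: "real (card {s \<in> {0..<int n}. odd s}) * real n = real n ^ 2 / 2"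
    using card_odd_atLeastLessThan[of n] by (auto simp: power2_eq_square elim!: evenE)
  define E where "E = exp (lam * (1/4) ^ (F - 1))"
  define D where "D = exp (lam * (1 - (1/4) ^ (F - 1))) - 1"
  \<comment> \<open>The count gives the probability bound 2/B; the 1/n term and the hypotheses on F are slack.\<close>
  have "E > 0" "D \<ge> 0" "real n > 0"
    unfolding E_def D_def using n assms(11) by (simp_all add: power_le_one)
  then have pos: "real n ^ 2 / 2 > 0"
    by simp
  have "(\<Sum>\<sigma>\<in>{s \<in> {0..<int n}. odd s}. \<Sum>b\<in>{0..<int n}.
          exp (lam * G (cent n (offset_o n B f \<sigma> b f'))))
      \<le> E * (real n ^ 2 / 2 + D * (real n * real K))"
    using sum_exp_flat_filter_offset_le[OF assms(7) n nBK K_def \<open>even n\<close> assms(8-11)]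
    unfolding E_def D_def S .
  also have "\<dots> \<le> E * ((2 / real B + 1 / real n) * D + 1) * (real n ^ 2 / 2)"
    using nBK \<open>E > 0\<close> \<open>D \<ge> 0\<close> \<open>real n > 0\<close> by (simp add: field_simps power2_eq_square)
  finally show ?thesis
    unfolding S pos_divide_le_eq[OF pos] E_def[symmetric] D_def[symmetric] .
qed

end
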